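(* If $\mathcal{R}$ is a call-by-value coupled logical bisimulation, then so is $\mathcal{R}^V=\left(\mathcal{R}_1^\star,\ \mathcal{R}_2\langle\mathcal{R}_1^\star\rangle_v\cup\mathcal{R}_1^\star\right)$. Consequently: if $M\approx^v_1 N$ then $C[M]\approx^v_1 C[N]$ for every context $C$ with $C[M],C[N]$ closed; and if $E\approx^v_2 F$ then $\mathcal{E}[E]\approx^v_2\mathcal{E}[F]$ for every call-by-value evaluation context $\mathcal{E}$.
   Context: $\Lambda^\bullet$ is the set of closed $\lambda$-terms; values are closed abstractions. Call-by-value reduction on closed terms: $MN\longrightarrow MN'$ if $N\longrightarrow N'$; $MV\longrightarrow M'V$ if $M\longrightarrow M'$ and $V$ is a value; $(\lambda x.P)V\longrightarrow P[V/x]$ if $V$ is a value; $\Longrightarrow$ is the reflexive transitive closure. Contexts are generated by $C::=x\mid[\cdot]\mid C\,C\mid\lambda x.C$, possibly with several holes numbered left to right; $C[\widetilde M]$ fills the $i$-th hole with $M_i$; $C[M]$ fills every hole with $M$. For $\mathcal{R}\subseteq\Lambda^\bullet\times\Lambda^\bullet$, $\mathcal{R}^\star=\{(C[\widetilde M],C[\widetilde N]) : C\text{ a context},\ M_i\,\mathcal{R}\,N_i\ \forall i,\ C[\widetilde M],C[\widetilde N]\in\Lambda^\bullet\}$. For relations $\mathcal{R},\mathcal{R}'$ on $\Lambda^\bullet$, $\mathcal{R}\langle\mathcal{R}'\rangle_v$ is the least relation such that: $X\,\mathcal{R}\,Y$ implies $X\,\mathcal{R}\langle\mathcal{R}'\rangle_v\,Y$;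 if $M\,\mathcal{R}'\,N$ and $X\,\mathcal{R}\langle\mathcal{R}'\rangle_v\,Y$ then $MX\,\mathcal{R}\langle\mathcal{R}'\rangle_v\,NY$; if $V,W$ are values with $V\,\mathcal{R}'\,W$ and $X\,\mathcal{R}\langle\mathcal{R}'\rangle_v\,Y$ then $XV\,\mathcal{R}\langle\mathcal{R}'\rangle_v\,YW$. Call-by-value evaluation contexts: $\mathcal{E}::=[\cdot]\mid M\,\mathcal{E}\mid\mathcal{E}\,V$ ($M\in\Lambda^\bullet$, $V$ a value). A coupled relation is a pair $(\mathcal{R}_1,\mathcal{R}_2)$ of relations on $\Lambda^\bullet$ with $\mathcal{R}_1\subseteq\mathcal{R}_2$. It is a call-by-value coupled logical bisimulation if whenever $M\,\mathcal{R}_2\,N$: (1) if $M\longrightarrow M'$ then there is $N'$ with $N\Longrightarrow N'$ and $M'\,\mathcal{R}_2\,N'$; (2) if $M=\lambda x.M'$ then $N\Longrightarrow\lambda x.N'$ for some $N'$, $\lambda x.M'\,\mathcal{R}_1\,\lambda x.N'$, and for all values $P,Q$ with $P\,\mathcal{R}_1^\star\,Q$, $M'[P/x]\,\mathcal{R}_2\,N'[Q/x]$; (3) the converses of (1),(2) with $M$ and $N$ exchanged. $(\approx^v_1,\approx^v_2)$ is the componentwise union of all call-by-value coupled logical bisimulations. *)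

theory Defs
  imports Main
begin

section \<open>Pure lambda terms (de Bruijn indices, so alpha-equivalence is syntactic equality)\<close>

datatype trm = Var nat | App trm trm | Lam trm

fun closed_at :: "nat \<Rightarrow> trm \<Rightarrow> bool" where
  "closed_at k (Var i) = (i < k)"
| "closed_at k (App M N) = (closed_at k M \<and> closed_at k N)"
| "closed_at k (Lam M) = closed_at (Suc k) M"

definition closed :: "trm \<Rightarrow> bool" where
  "closed M = closed_at 0 M"

fun lift :: "nat \<Rightarrow> trm \<Rightarrow> trm" where
  "lift k (Var i) = (if i < k then Var i else Var (Suc i))"
| "lift k (App M N) = App (lift k M) (lift k N)"
| "lift k (Lam M) = Lam (lift (Suc k) M)"

fun subst :: "trm \<Rightarrow> nat \<Rightarrow> trm \<Rightarrow> trm" where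
  "subst (Var i) k P = (if i < k then Var i else if i = k then P else Var (i - 1))"
| "subst (App M N) k P = App (subst M k P) (subst N k P)"
| "subst (Lam M) k P = Lam (subst M (Suc k) (lift 0 P))"

definition is_val :: "trm \<Rightarrow> bool" where
  "is_val M = (closed M \<and> (\<exists>M'. M = Lam M'))"

section \<open>Call-by-value reduction (argument evaluated first)\<close>

inductive cbv :: "trm \<Rightarrow> trm \<Rightarrow> bool" where
  appR: "cbv N N' \<Longrightarrow> cbv (App M N) (App M N')"
| appL: "cbv M M' \<Longrightarrow> is_val V \<Longrightarrow> cbv (App M V) (App M' V)"
| beta: "is_val V \<Longrightarrow> cbv (App (Lam P) V) (subst P 0 V)"

abbreviation cbv_star :: "trm \<Rightarrow> trm \<Rightarrow> bool" where
  "cbv_star \<equiv> cbv\<^sup>*\<^sup>*"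

datatype ctx = CVar nat | Hole | CApp ctx ctx | CLam ctx

fun holes :: "ctx \<Rightarrow> nat" where
  "holes (CVar i) = 0"
| "holes Hole = 1"
| "holes (CApp C D) = holes C + holes D"
| "holes (CLam C) = holes C"

fun fill :: "ctx \<Rightarrow> trm list \<Rightarrow> trm" where
  "fill (CVar i) Ms = Var i"
| "fill Hole Ms = hd Ms"
| "fill (CApp C D) Ms = App (fill C (take (holes C) Ms)) (fill D (drop (holes C) Ms))"
| "fill (CLam C) Ms = Lam (fill C Ms)"

definition fill_all :: "ctx \<Rightarrow> trm \<Rightarrow> trm" where
  "fill_all C M = fill C (replicate (holes C) M)"

definition ctx_closure :: "trm rel \<Rightarrow> trm rel" where
  "ctx_closure R = {(fill C Ms, fill C Ns) | C Ms Ns.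
      length Ms = holes C \<and> list_all2 (\<lambda>M N. (M, N) \<in> R) Ms Ns \<and>
      closed (fill C Ms) \<and> closed (fill C Ns)}"

inductive_set bracket_v :: "trm rel \<Rightarrow> trm rel \<Rightarrow> trm rel" for R R' where
  base: "(X, Y) \<in> R \<Longrightarrow> (X, Y) \<in> bracket_v R R'"
| argR: "(M, N) \<in> R' \<Longrightarrow> (X, Y) \<in> bracket_v R R' \<Longrightarrow> (App M X, App N Y) \<in> bracket_v R R'"
| funL: "is_val V \<Longrightarrow> is_val W \<Longrightarrow> (V, W) \<in> R' \<Longrightarrow> (X, Y) \<in> bracket_v R R'
          \<Longrightarrow> (App X V, App Y W) \<in> bracket_v R R'"

datatype ectx = EHole | EArg trm ectx | EFun ectx trm

fun ectx_ok :: "ectx \<Rightarrow> bool" where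
  "ectx_ok EHole = True"
| "ectx_ok (EArg M E) = (closed M \<and> ectx_ok E)"
| "ectx_ok (EFun E V) = (is_val V \<and> ectx_ok E)"

fun efill :: "ectx \<Rightarrow> trm \<Rightarrow> trm" where
  "efill EHole M = M"
| "efill (EArg N E) M = App N (efill E M)"
| "efill (EFun E V) M = App (efill E M) V"

definition rel_closed :: "trm rel \<Rightarrow> bool" where
  "rel_closed R = (\<forall>(M, N) \<in> R. closed M \<and> closed N)"

definition coupled :: "trm rel \<Rightarrow> trm rel \<Rightarrow> bool" where
  "coupled R1 R2 = (rel_closed R1 \<and> rel_closed R2 \<and> R1 \<subseteq> R2)"

definition cbv_clb :: "trm rel \<Rightarrow> trm rel \<Rightarrow> bool" where
  "cbv_clb R1 R2 = (coupled R1 R2 \<and>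
    (\<forall>M N. (M, N) \<in> R2 \<longrightarrow>
      (\<forall>M'. cbv M M' \<longrightarrow> (\<exists>N'. cbv_star N N' \<and> (M', N') \<in> R2)) \<and>
      (\<forall>M'. M = Lam M' \<longrightarrow> (\<exists>N'. cbv_star N (Lam N') \<and> (Lam M', Lam N') \<in> R1 \<and>
          (\<forall>P Q. is_val P \<longrightarrow> is_val Q \<longrightarrow> (P, Q) \<in> ctx_closure R1 \<longrightarrow>
              (subst M' 0 P, subst N' 0 Q) \<in> R2))) \<and>
      (\<forall>N'. cbv N N' \<longrightarrow> (\<exists>M'. cbv_star M M' \<and> (M', N') \<in> R2)) \<and>
      (\<forall>N'. N = Lam N' \<longrightarrow> (\<exists>M'. cbv_star M (Lam M') \<and> (Lam M', Lam N') \<in> R1 \<and>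
          (\<forall>P Q. is_val P \<longrightarrow> is_val Q \<longrightarrow> (P, Q) \<in> ctx_closure R1 \<longrightarrow>
              (subst M' 0 P, subst N' 0 Q) \<in> R2)))))"

definition approx1 :: "trm rel" where
  "approx1 = \<Union>{R1. \<exists>R2. cbv_clb R1 R2}"

definition approx2 :: "trm rel" where
  "approx2 = \<Union>{R2. \<exists>R1. cbv_clb R1 R2}"

end

theory Submission
  imports Defs
begin

section \<open>Closed terms, substitution and reduction\<close>

lemma closed_at_mono: "closed_at k M \<Longrightarrow> k \<le> n \<Longrightarrow> closed_at n M"
  by (induction M arbitrary: k n) auto

lemma lift_closed: "closed_at k M \<Longrightarrow> k \<le> n \<Longrightarrow> lift n M = M"
  by (induction M arbitrary: k n) auto

lemma subst_closed: "closed_at k M \<Longrightarrow> k \<le> n \<Longrightarrow> subst M n P = M"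
  by (induction M arbitrary: k n P) auto

lemma closed_at_subst:
  assumes "closed_at (Suc k) M" "j \<le> k" "closed P"
  shows "closed_at k (subst M j P)"
  using assms
proof (induction M arbitrary: k j)
  case (Var i)
  then show ?case using closed_at_mono[of 0 P k] by (auto simp: closed_def)
next
  case (Lam M)
  have "lift 0 P = P" using Lam.prems(3) lift_closed[of 0 P 0] by (simp add: closed_def)
  then show ?case using Lam by auto
qed auto

lemma closed_subst0: "closed (Lam M) \<Longrightarrow> closed P \<Longrightarrow> closed (subst M 0 P)"
  using closed_at_subst[of 0 M 0 P] by (simp add: closed_def)

lemma closed_App [simp]: "closed (App M N) \<longleftrightarrow> closed M \<and> closed N"
  by (simp add: closed_def)

lemma is_val_closed: "is_val V \<Longrightarrow> closed V"
  by (simp add: is_val_def)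

lemma Lam_no_step: "\<not> cbv (Lam M) N"
  by (auto elim: cbv.cases)

lemma cbv_closed: "cbv M M' \<Longrightarrow> closed M \<Longrightarrow> closed M'"
  by (induction rule: cbv.induct) (auto simp: is_val_def intro: closed_subst0)

lemma cbv_star_closed: "cbv_star M M' \<Longrightarrow> closed M \<Longrightarrow> closed M'"
  by (induction rule: rtranclp_induct) (auto intro: cbv_closed)

lemma cbv_star_Lam_val: "cbv_star N (Lam N') \<Longrightarrow> closed N \<Longrightarrow> is_val (Lam N')"
  using cbv_star_closed is_val_def by blast

lemma cbv_star_appR: "cbv_star N N' \<Longrightarrow> cbv_star (App M N) (App M N')"
  by (induction rule: rtranclp_induct) (auto intro: rtranclp.rtrancl_into_rtrancl cbv.appR)

lemma cbv_star_appL: "cbv_star M M' \<Longrightarrow> is_val V \<Longrightarrow> cbv_star (App M V) (App M' V)"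
  by (induction rule: rtranclp_induct) (auto intro: rtranclp.rtrancl_into_rtrancl cbv.appL)

lemma cbv_star_app:
  assumes "cbv_star N (Lam N')" "closed N" "cbv_star M M'"
  shows "cbv_star (App M N) (App M' (Lam N'))"
  using cbv_star_appR[OF assms(1)] cbv_star_appL[OF assms(3) cbv_star_Lam_val[OF assms(1,2)]]
  by (rule rtranclp_trans)

section \<open>Contextual closure\<close>

inductive_set compat_closure :: "trm rel \<Rightarrow> trm rel" for R where
  ccRel: "(M, N) \<in> R \<Longrightarrow> (M, N) \<in> compat_closure R"
| ccVar: "(Var i, Var i) \<in> compat_closure R"
| ccApp: "(M, N) \<in> compat_closure R \<Longrightarrow> (M', N') \<in> compat_closure R
           \<Longrightarrow> (App M M', App N N') \<in> compat_closure R"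
| ccLam: "(M, N) \<in> compat_closure R \<Longrightarrow> (Lam M, Lam N) \<in> compat_closure R"

lemma fill_compat_closure:
  "length Ms = holes C \<Longrightarrow> list_all2 (\<lambda>M N. (M, N) \<in> R) Ms Ns
   \<Longrightarrow> (fill C Ms, fill C Ns) \<in> compat_closure R"
proof (induction C arbitrary: Ms Ns)
  case Hole
  then obtain M N where "Ms = [M]" "Ns = [N]"
    by (cases Ms; cases Ns) auto
  with Hole show ?case by (auto intro: compat_closure.intros)
qed (auto intro: compat_closure.intros)

lemma compat_closure_fill:
  "(M, N) \<in> compat_closure R \<Longrightarrow> \<exists>C Ms Ns. M = fill C Ms \<and> N = fill C Ns \<and>
     length Ms = holes C \<and> list_all2 (\<lambda>M N. (M, N) \<in> R) Ms Ns"
proof (induction rule: compat_closure.induct)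
  case (ccRel M N)
  then show ?case by (intro exI[of _ Hole] exI[of _ "[M]"] exI[of _ "[N]"]) auto
next
  case (ccVar i)
  then show ?case by (intro exI[of _ "CVar i"] exI[of _ "[]"]) auto
next
  case (ccApp M N M' N')
  then obtain C1 Ms1 Ns1 C2 Ms2 Ns2 where
    "M = fill C1 Ms1" "N = fill C1 Ns1" "length Ms1 = holes C1"
    "list_all2 (\<lambda>M N. (M, N) \<in> R) Ms1 Ns1"
    "M' = fill C2 Ms2" "N' = fill C2 Ns2" "length Ms2 = holes C2"
    "list_all2 (\<lambda>M N. (M, N) \<in> R) Ms2 Ns2"
    by blast
  moreover from this have "length Ns1 = holes C1" using list_all2_lengthD by metis
  ultimately show ?case
    by (intro exI[of _ "CApp C1 C2"] exI[of _ "Ms1 @ Ms2"] exI[of _ "Ns1 @ Ns2"])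
       (auto intro: list_all2_appendI)
next
  case (ccLam M N)
  then show ?case by (metis fill.simps(4) holes.simps(4))
qed

lemma ctx_closure_eq: "ctx_closure R = {(M, N). (M, N) \<in> compat_closure R \<and> closed M \<and> closed N}"
proof (intro set_eqI iffI)
  fix p assume "p \<in> ctx_closure R"
  then show "p \<in> {(M, N). (M, N) \<in> compat_closure R \<and> closed M \<and> closed N}"
    unfolding ctx_closure_def by (auto intro: fill_compat_closure)
next
  fix p assume "p \<in> {(M, N). (M, N) \<in> compat_closure R \<and> closed M \<and> closed N}"
  then show "p \<in> ctx_closure R"
    unfolding ctx_closure_def by (auto dest!: compat_closure_fill)
qed

lemma ctx_closureI: "(M, N) \<in> compat_closure R \<Longrightarrow> closed M \<Longrightarrow> closed N \<Longrightarrow> (M, N) \<in> ctx_closure R"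
  by (simp add: ctx_closure_eq)

lemma ctx_closureD:
  "(M, N) \<in> ctx_closure R \<Longrightarrow> (M, N) \<in> compat_closure R \<and> closed M \<and> closed N"
  by (simp add: ctx_closure_eq)

lemma rel_closed_ctx_closure: "rel_closed (ctx_closure R)"
  by (auto simp: rel_closed_def ctx_closure_eq)

lemma compat_closure_refl: "(M, M) \<in> compat_closure R"
  by (induction M) (auto intro: compat_closure.intros)

lemma compat_closure_mono: "(M, N) \<in> compat_closure R \<Longrightarrow> R \<subseteq> R' \<Longrightarrow> (M, N) \<in> compat_closure R'"
  by (induction rule: compat_closure.induct) (auto intro: compat_closure.intros)

lemma compat_closure_idem: "(M, N) \<in> compat_closure (compat_closure R) \<Longrightarrow> (M, N) \<in> compat_closure R"
  by (induction rule: compat_closure.induct) (auto intro: compat_closure.intros)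

lemma ctx_closure_refl: "closed M \<Longrightarrow> (M, M) \<in> ctx_closure R"
  by (simp add: ctx_closureI compat_closure_refl)

lemma ctx_closure_app:
  "(M, N) \<in> ctx_closure R \<Longrightarrow> (M', N') \<in> ctx_closure R \<Longrightarrow> (App M M', App N N') \<in> ctx_closure R"
  by (auto simp: ctx_closure_eq intro: compat_closure.ccApp)

lemma ctx_closure_base: "rel_closed R \<Longrightarrow> (M, N) \<in> R \<Longrightarrow> (M, N) \<in> ctx_closure R"
  by (auto simp: rel_closed_def intro: ctx_closureI compat_closure.ccRel)

text \<open>Closing twice adds nothing; needed because the bisimulation clause for \<open>(R\<^sup>\<star>, _)\<close>
  quantifies over \<open>(R\<^sup>\<star>)\<^sup>\<star>\<close>-related arguments.\<close>

lemma ctx_closure_idem: "(P, Q) \<in> ctx_closure (ctx_closure R) \<Longrightarrow> (P, Q) \<in> ctx_closure R"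
proof -
  assume PQ: "(P, Q) \<in> ctx_closure (ctx_closure R)"
  have "ctx_closure R \<subseteq> compat_closure R" by (auto simp: ctx_closure_eq)
  then have "(P, Q) \<in> compat_closure (compat_closure R)"
    using ctx_closureD[OF PQ] compat_closure_mono by blast
  then show ?thesis using ctx_closureD[OF PQ] compat_closure_idem ctx_closureI by blast
qed

lemma compat_closure_converse: "(M, N) \<in> compat_closure (R\<inverse>) \<longleftrightarrow> (N, M) \<in> compat_closure R"
proof -
  have conv: "(N, M) \<in> compat_closure R'" if "(M, N) \<in> compat_closure (R'\<inverse>)" for M N R'
    using that by (induction rule: compat_closure.induct) (auto intro: compat_closure.intros)
  show ?thesis using conv[of M N R] conv[of N M "R\<inverse>"] by auto
qed

lemma ctx_closure_converse: "ctx_closure (R\<inverse>) = (ctx_closure R)\<inverse>"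
  by (auto simp: ctx_closure_eq compat_closure_converse)

lemma compat_closure_subst:
  assumes "(M, N) \<in> compat_closure R" "rel_closed R" "(P, Q) \<in> compat_closure R" "closed P" "closed Q"
  shows "(subst M k P, subst N k Q) \<in> compat_closure R"
  using assms
proof (induction arbitrary: k rule: compat_closure.induct)
  case (ccRel M N)
  then have "closed M" "closed N" by (auto simp: rel_closed_def)
  then show ?case using ccRel subst_closed[of 0 M k P] subst_closed[of 0 N k Q]
    by (auto simp: closed_def intro: compat_closure.intros)
next
  case (ccLam M N)
  have "lift 0 P = P" "lift 0 Q = Q"
    using ccLam.prems lift_closed[of 0 _ 0] by (auto simp: closed_def)
  then show ?case using ccLam by (auto intro: compat_closure.intros)
qed (auto intro: compat_closure.intros)

lemma ctx_closure_subst: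
  assumes "(M, N) \<in> compat_closure R" "closed (Lam M)" "closed (Lam N)" "rel_closed R"
    and "(P, Q) \<in> ctx_closure R"
  shows "(subst M 0 P, subst N 0 Q) \<in> ctx_closure R"
  using assms ctx_closureD[OF assms(5)]
  by (auto intro!: ctx_closureI compat_closure_subst closed_subst0)

lemma fill_all_ctx_closure:
  "(M, N) \<in> R \<Longrightarrow> closed (fill_all C M) \<Longrightarrow> closed (fill_all C N)
   \<Longrightarrow> (fill_all C M, fill_all C N) \<in> ctx_closure R"
  unfolding fill_all_def
  by (auto intro!: ctx_closureI fill_compat_closure simp: list_all2_conv_all_nth)

lemma bracket_v_closed:
  "(X, Y) \<in> bracket_v R R' \<Longrightarrow> rel_closed R \<Longrightarrow> rel_closed R' \<Longrightarrow> closed X \<and> closed Y"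
  by (induction rule: bracket_v.induct) (auto simp: rel_closed_def)

text \<open>Only the base rule can relate an abstraction.\<close>

lemma bracket_v_Lam: "(Lam M, Y) \<in> bracket_v R R' \<Longrightarrow> (Lam M, Y) \<in> R"
  by (cases rule: bracket_v.cases) auto

lemma bracket_v_converse: "bracket_v (R\<inverse>) (R'\<inverse>) = (bracket_v R R')\<inverse>"
proof -
  have conv: "(Y, X) \<in> bracket_v R R'" if "(X, Y) \<in> bracket_v (R\<inverse>) (R'\<inverse>)" for X Y R R'
    using that by (induction rule: bracket_v.induct) (auto intro: bracket_v.intros)
  show ?thesis using conv[of _ _ R R'] conv[of _ _ "R\<inverse>" "R'\<inverse>"] by auto
qed

lemma efill_bracket_v:
  "(E, F) \<in> R \<Longrightarrow> ectx_ok \<E> \<Longrightarrow> (efill \<E> E, efill \<E> F) \<in> bracket_v R (ctx_closure R')"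
  by (induction \<E>) (auto intro: bracket_v.intros ctx_closure_refl is_val_closed)

section \<open>Bisimulations via their forward halves\<close>

definition clb_forward :: "trm rel \<Rightarrow> trm rel \<Rightarrow> bool" where
  "clb_forward R1 R2 = (\<forall>M N. (M, N) \<in> R2 \<longrightarrow>
      (\<forall>M'. cbv M M' \<longrightarrow> (\<exists>N'. cbv_star N N' \<and> (M', N') \<in> R2)) \<and>
      (\<forall>M'. M = Lam M' \<longrightarrow> (\<exists>N'. cbv_star N (Lam N') \<and> (Lam M', Lam N') \<in> R1 \<and>
          (\<forall>P Q. is_val P \<longrightarrow> is_val Q \<longrightarrow> (P, Q) \<in> ctx_closure R1 \<longrightarrow>
              (subst M' 0 P, subst N' 0 Q) \<in> R2))))"

text \<open>The right-to-left clauses are the forward clauses of the converse pair.\<close>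

lemma cbv_clb_forward:
  "cbv_clb R1 R2 \<longleftrightarrow> coupled R1 R2 \<and> clb_forward R1 R2 \<and> clb_forward (R1\<inverse>) (R2\<inverse>)"
proof -
  have "clb_forward (R1\<inverse>) (R2\<inverse>) \<longleftrightarrow> (\<forall>M N. (M, N) \<in> R2 \<longrightarrow>
      (\<forall>N'. cbv N N' \<longrightarrow> (\<exists>M'. cbv_star M M' \<and> (M', N') \<in> R2)) \<and>
      (\<forall>N'. N = Lam N' \<longrightarrow> (\<exists>M'. cbv_star M (Lam M') \<and> (Lam M', Lam N') \<in> R1 \<and>
          (\<forall>P Q. is_val P \<longrightarrow> is_val Q \<longrightarrow> (P, Q) \<in> ctx_closure R1 \<longrightarrow>
              (subst M' 0 P, subst N' 0 Q) \<in> R2))))"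
    unfolding clb_forward_def ctx_closure_converse converse_iff
    by blast
  then show ?thesis
    unfolding cbv_clb_def clb_forward_def all_conj_distrib imp_conjR by auto
qed

lemma coupled_converse: "coupled (R1\<inverse>) (R2\<inverse>) \<longleftrightarrow> coupled R1 R2"
  unfolding coupled_def rel_closed_def by auto

lemma clb_forward_step:
  "clb_forward R1 R2 \<Longrightarrow> (M, N) \<in> R2 \<Longrightarrow> cbv M M' \<Longrightarrow> \<exists>N'. cbv_star N N' \<and> (M', N') \<in> R2"
  unfolding clb_forward_def by blast

lemma clb_forward_Lam:
  "clb_forward R1 R2 \<Longrightarrow> (Lam M', N) \<in> R2 \<Longrightarrow>
     \<exists>N'. cbv_star N (Lam N') \<and> (Lam M', Lam N') \<in> R1 \<and>
       (\<forall>P Q. is_val P \<longrightarrow> is_val Q \<longrightarrow> (P, Q) \<in> ctx_closure R1 \<longrightarrow> (subst M' 0 P, subst N' 0 Q) \<in> R2)"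
  unfolding clb_forward_def by blast

section \<open>The up-to-context relation is a bisimulation\<close>

abbreviation up_to_ctx :: "trm rel \<Rightarrow> trm rel \<Rightarrow> trm rel" where
  "up_to_ctx R1 R2 \<equiv> bracket_v R2 (ctx_closure R1) \<union> ctx_closure R1"

lemma up_to_ctx_converse: "up_to_ctx (R1\<inverse>) (R2\<inverse>) = (up_to_ctx R1 R2)\<inverse>"
  by (auto simp: ctx_closure_converse bracket_v_converse)

lemma up_to_ctx_closed:
  "coupled R1 R2 \<Longrightarrow> (M, N) \<in> up_to_ctx R1 R2 \<Longrightarrow> closed M \<and> closed N"
  using bracket_v_closed[OF _ _ rel_closed_ctx_closure] ctx_closureD
  by (auto simp: coupled_def)

text \<open>For the contextual part
  the matching abstraction is the term itself and we use stability under substitution.\<close>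

lemma up_to_ctx_Lam:
  assumes co: "coupled R1 R2" and fw: "clb_forward R1 R2"
    and rel: "(Lam M', N) \<in> up_to_ctx R1 R2"
  shows "\<exists>N'. cbv_star N (Lam N') \<and> (Lam M', Lam N') \<in> ctx_closure R1 \<and>
     (\<forall>P Q. is_val P \<longrightarrow> is_val Q \<longrightarrow> (P, Q) \<in> ctx_closure R1 \<longrightarrow>
        (subst M' 0 P, subst N' 0 Q) \<in> up_to_ctx R1 R2)"
proof -
  have R1_closed: "rel_closed R1" and R1_R2: "R1 \<subseteq> R2" using co by (auto simp: coupled_def)
  have "(Lam M', N) \<in> R2 \<or>
      (\<exists>N0. N = Lam N0 \<and> (M', N0) \<in> compat_closure R1 \<and> closed (Lam M') \<and> closed N)"
  proof (cases "(Lam M', N) \<in> ctx_closure R1")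
    case True
    then have "(Lam M', N) \<in> compat_closure R1" "closed (Lam M')" "closed N"
      using ctx_closureD by blast+
    then show ?thesis using R1_R2 by (cases rule: compat_closure.cases) auto
  next
    case False
    then show ?thesis using rel bracket_v_Lam by blast
  qed
  then show ?thesis
  proof (elim disjE exE conjE)
    assume "(Lam M', N) \<in> R2"
    then obtain N' where "cbv_star N (Lam N')" "(Lam M', Lam N') \<in> R1" and sub:
      "\<And>P Q. is_val P \<Longrightarrow> is_val Q \<Longrightarrow> (P, Q) \<in> ctx_closure R1 \<Longrightarrow> (subst M' 0 P, subst N' 0 Q) \<in> R2"
      using clb_forward_Lam[OF fw] by blast
    then show ?thesis
      using ctx_closure_base[OF R1_closed] bracket_v.base[OF sub] by blast
  next
    fix N0 assume "N = Lam N0" "(M', N0) \<in> compat_closure R1" "closed (Lam M')" "closed N"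
    then show ?thesis
      using R1_closed ctx_closure_subst[of M' N0 R1] ctx_closureI[of "Lam M'" "Lam N0" R1]
      by (blast intro: compat_closure.ccLam)
  qed
qed

text \<open>If the argument may still reduce, the functions must
  be contextually related so that the result stays in \<open>R\<^sup>V\<^sub>2\<close>; this holds for both rules of
  \<open>R\<^sub>2<R\<^sub>1\<^sup>\<star>>\<^sub>v\<close> and for the contextual closure.\<close>

lemma up_to_ctx_app_step:
  fixes R1 R2 T :: "trm rel"
  defines "T \<equiv> up_to_ctx R1 R2"
  assumes co: "coupled R1 R2" and fw: "clb_forward R1 R2"
    and fun_rel: "(M, N) \<in> T" and arg_rel: "(X, Y) \<in> T"
    and fun_ctx: "is_val X \<or> (M, N) \<in> ctx_closure R1"
    and fun_sim: "\<And>M'. cbv M M' \<Longrightarrow> \<exists>N'. cbv_star N N' \<and> (M', N') \<in> T"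
    and arg_sim: "\<And>X'. cbv X X' \<Longrightarrow> \<exists>Y'. cbv_star Y Y' \<and> (X', Y') \<in> T"
    and step: "cbv (App M X) Z"
  shows "\<exists>Z'. cbv_star (App N Y) Z' \<and> (Z, Z') \<in> T"
proof -
  have T_closed: "closed Y" using up_to_ctx_closed[OF co] arg_rel unfolding T_def by blast
  have arg_val: "\<exists>Y0. cbv_star Y (Lam Y0) \<and> is_val (Lam Y0) \<and> (X, Lam Y0) \<in> ctx_closure R1"
    if X_val: "is_val X"
  proof -
    obtain X0 where "X = Lam X0" using X_val by (auto simp: is_val_def)
    then obtain Y0 where "cbv_star Y (Lam Y0)" "(X, Lam Y0) \<in> ctx_closure R1"
      using up_to_ctx_Lam[OF co fw] arg_rel unfolding T_def by blast
    then show ?thesis using cbv_star_Lam_val T_closed by blast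
  qed
  from step show ?thesis
  proof (cases rule: cbv.cases)
    case (appR X')
    then have "(M, N) \<in> ctx_closure R1" using fun_ctx Lam_no_step by (auto simp: is_val_def)
    moreover obtain Y' where "cbv_star Y Y'" "(X', Y') \<in> T" using arg_sim appR by blast
    ultimately show ?thesis
      using appR cbv_star_appR ctx_closure_app unfolding T_def by (blast intro: bracket_v.argR)
  next
    case (appL M')
    obtain Y0 where Y0: "cbv_star Y (Lam Y0)" "is_val (Lam Y0)" "(X, Lam Y0) \<in> ctx_closure R1"
      using arg_val appL by blast
    obtain N' where N': "cbv_star N N'" "(M', N') \<in> T" using fun_sim appL by blast
    have "(App M' X, App N' (Lam Y0)) \<in> T"
      using N'(2) Y0(2,3) appL ctx_closure_app unfolding T_def by (blast intro: bracket_v.funL)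
    moreover have "cbv_star (App N Y) (App N' (Lam Y0))"
      using cbv_star_app Y0(1) N'(1) T_closed by blast
    ultimately show ?thesis using appL by blast
  next
    case (beta M0)
    obtain Y0 where Y0: "cbv_star Y (Lam Y0)" "is_val (Lam Y0)" "(X, Lam Y0) \<in> ctx_closure R1"
      using arg_val beta by blast
    obtain N0 where N0: "cbv_star N (Lam N0)"
      "\<And>P Q. is_val P \<Longrightarrow> is_val Q \<Longrightarrow> (P, Q) \<in> ctx_closure R1 \<Longrightarrow> (subst M0 0 P, subst N0 0 Q) \<in> T"
      using up_to_ctx_Lam[OF co fw] fun_rel beta unfolding T_def by blast
    have "cbv_star (App N Y) (App (Lam N0) (Lam Y0))"
      using cbv_star_app Y0(1) N0(1) T_closed by blast
    then have "cbv_star (App N Y) (subst N0 0 (Lam Y0))"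
      using cbv.beta[OF Y0(2)] by (rule rtranclp.rtrancl_into_rtrancl)
    moreover have "(subst M0 0 X, subst N0 0 (Lam Y0)) \<in> T" using N0(2) beta Y0(2,3) by blast
    ultimately show ?thesis using beta by blast
  qed
qed

lemma ctx_closure_step:
  assumes co: "coupled R1 R2" and fw: "clb_forward R1 R2"
  shows "(M, N) \<in> compat_closure R1 \<Longrightarrow> closed M \<Longrightarrow> closed N \<Longrightarrow> cbv M M' \<Longrightarrow>
     \<exists>N'. cbv_star N N' \<and> (M', N') \<in> up_to_ctx R1 R2"
proof (induction arbitrary: M' rule: compat_closure.induct)
  case (ccRel M N)
  then have "(M, N) \<in> R2" using co by (auto simp: coupled_def)
  then show ?case using clb_forward_step[OF fw] ccRel by (blast intro: bracket_v.base)
next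
  case (ccApp M N X Y)
  have cl: "closed M" "closed N" "closed X" "closed Y" using ccApp.prems by auto
  have "(M, N) \<in> ctx_closure R1" "(X, Y) \<in> ctx_closure R1"
    using ccApp.hyps cl by (auto intro: ctx_closureI)
  then show ?case
    using up_to_ctx_app_step[OF co fw, of M N X Y] ccApp.IH(1)[OF cl(1,2)] ccApp.IH(2)[OF cl(3,4)]
      ccApp.prems(3) by blast
qed (auto simp: closed_def Lam_no_step)

lemma bracket_v_step:
  assumes co: "coupled R1 R2" and fw: "clb_forward R1 R2"
  shows "(M, N) \<in> bracket_v R2 (ctx_closure R1) \<Longrightarrow> cbv M M' \<Longrightarrow>
     \<exists>N'. cbv_star N N' \<and> (M', N') \<in> up_to_ctx R1 R2"
proof (induction arbitrary: M' rule: bracket_v.induct)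
  case (base X Y)
  then show ?case using clb_forward_step[OF fw] by (blast intro: bracket_v.base)
next
  case (argR M N X Y)
  have "\<exists>N'. cbv_star N N' \<and> (M', N') \<in> up_to_ctx R1 R2" if "cbv M M'" for M'
    using ctx_closure_step[OF co fw] ctx_closureD[OF argR(1)] that by blast
  then show ?case using up_to_ctx_app_step[OF co fw] argR by blast
next
  case (funL V W X Y)
  have "\<not> cbv V V'" for V' using funL(1) Lam_no_step by (auto simp: is_val_def)
  then show ?case using up_to_ctx_app_step[OF co fw, of X Y V W] funL by blast
qed

lemma up_to_ctx_forward:
  assumes co: "coupled R1 R2" and fw: "clb_forward R1 R2"
  shows "clb_forward (ctx_closure R1) (up_to_ctx R1 R2)"
  unfolding clb_forward_def
proof (intro allI impI conjI)
  fix M N M' assume "(M, N) \<in> up_to_ctx R1 R2" "cbv M M'"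
  then show "\<exists>N'. cbv_star N N' \<and> (M', N') \<in> up_to_ctx R1 R2"
    using ctx_closure_step[OF co fw] bracket_v_step[OF co fw] ctx_closureD by blast
next
  fix M N M' assume "(M, N) \<in> up_to_ctx R1 R2" "M = Lam M'"
  then show "\<exists>N'. cbv_star N (Lam N') \<and> (Lam M', Lam N') \<in> ctx_closure R1 \<and>
       (\<forall>P Q. is_val P \<longrightarrow> is_val Q \<longrightarrow> (P, Q) \<in> ctx_closure (ctx_closure R1) \<longrightarrow>
          (subst M' 0 P, subst N' 0 Q) \<in> up_to_ctx R1 R2)"
    using up_to_ctx_Lam[OF co fw] ctx_closure_idem by blast
qed

lemma up_to_ctx_coupled:
  assumes "coupled R1 R2"
  shows "coupled (ctx_closure R1) (up_to_ctx R1 R2)"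
proof -
  have "rel_closed (up_to_ctx R1 R2)" unfolding rel_closed_def using up_to_ctx_closed[OF assms] by blast
  then show ?thesis using rel_closed_ctx_closure unfolding coupled_def by blast
qed

text \<open>Main result: \<open>(R\<^sub>1\<^sup>\<star>, R\<^sub>2<R\<^sub>1\<^sup>\<star>>\<^sub>v \<union> R\<^sub>1\<^sup>\<star>)\<close> is a bisimulation; the backward half is the
  forward half for the converse bisimulation.\<close>

lemma up_to_ctx_clb:
  assumes "cbv_clb R1 R2"
  shows "cbv_clb (ctx_closure R1) (up_to_ctx R1 R2)"
proof -
  have co: "coupled R1 R2" and fw: "clb_forward R1 R2" and bw: "clb_forward (R1\<inverse>) (R2\<inverse>)"
    using assms by (auto simp: cbv_clb_forward)
  have "clb_forward (ctx_closure (R1\<inverse>)) (up_to_ctx (R1\<inverse>) (R2\<inverse>))"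
    using up_to_ctx_forward[OF _ bw] co coupled_converse by blast
  then have "clb_forward ((ctx_closure R1)\<inverse>) ((up_to_ctx R1 R2)\<inverse>)"
    unfolding up_to_ctx_converse[symmetric] ctx_closure_converse[symmetric] .
  then show ?thesis
    using up_to_ctx_coupled[OF co] up_to_ctx_forward[OF co fw] by (simp add: cbv_clb_forward)
qed

theorem mainTheorem16:
  shows "(\<forall>R1 R2. cbv_clb R1 R2 \<longrightarrow>
            cbv_clb (ctx_closure R1) (bracket_v R2 (ctx_closure R1) \<union> ctx_closure R1))
       \<and> (\<forall>M N C. (M, N) \<in> approx1 \<longrightarrow> closed (fill_all C M) \<longrightarrow> closed (fill_all C N) \<longrightarrow>
            (fill_all C M, fill_all C N) \<in> approx1)
       \<and> (\<forall>E F \<E>. (E, F) \<in> approx2 \<longrightarrow> ectx_ok \<E> \<longrightarrow>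
            (efill \<E> E, efill \<E> F) \<in> approx2)"
proof (intro conjI allI impI)
  fix R1 R2 assume "cbv_clb R1 R2"
  then show "cbv_clb (ctx_closure R1) (up_to_ctx R1 R2)" by (rule up_to_ctx_clb)
next
  fix M N C assume "(M, N) \<in> approx1" "closed (fill_all C M)" "closed (fill_all C N)"
  moreover from this obtain R1 R2 where "cbv_clb R1 R2" "(M, N) \<in> R1"
    unfolding approx1_def by blast
  ultimately show "(fill_all C M, fill_all C N) \<in> approx1"
    using up_to_ctx_clb fill_all_ctx_closure unfolding approx1_def by blast
next
  fix E F \<E> assume "(E, F) \<in> approx2" "ectx_ok \<E>"
  moreover from this obtain R1 R2 where "cbv_clb R1 R2" "(E, F) \<in> R2"
    unfolding approx2_def by blast
  ultimately show "(efill \<E> E, efill \<E> F) \<in> approx2"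
    using up_to_ctx_clb efill_bracket_v[of E F R2 \<E> R1] unfolding approx2_def by blast
qed

end
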